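(* Let $P$ be a finite graded poset of rank $n$ with $\hat0$ and $\hat1$ admitting an $S_n$ EL-labeling, and let $\chi_P$ be the character of the representation of $\mathcal{H}_n(0)$ on $\mathbb{C}\mathcal{M}(P)$ in which $T_i$ acts as $-U_i$. Then $\omega F_P(x)=\mathrm{ch}(\chi_P)$.
   Context: $P$ finite graded of rank $n$ with $\hat0,\hat1$; $\mathcal{M}(P)$ its maximal chains; $\mathrm{rk}$ its rank function, $\mathrm{rk}(x,y)=\mathrm{rk}(y)-\mathrm{rk}(x)$. An $S_n$ EL-labeling is an edge-labeling $\lambda$ of the covering pairs of $P$ such that every interval $[s,t]$ has exactly one maximal chain with weakly increasing labels (bottom to top), whose label sequence is lexicographically smallest among maximal chains of $[s,t]$, and such that the labels $\omega_{\mathfrak m}=(\lambda(x_0,x_1),\dots,\lambda(x_{n-1},x_n))$ along every maximal chain $\mathfrak m:\hat0=x_0<\cdots<x_n=\hat1$ form a permutation of $[n]$. For $i\in[n-1]$, $U_i(\mathfrak m)$ is the unique maximal chain agreeing with $\mathfrak m$ except possibly at rank $i$ and whose label permutation has no descent at $i$; these satisfy the defining relations of $\mathcal{H}_n(0)$ with $T_i=-U_i$ (where $\mathcal{H}_n(0)$ is generated by $T_1,\dots,T_{n-1}$ with $T_i^2=-T_i$, $T_iT_j=T_jT_i$ for $|i-j|\ge2$, $T_iT_{i+1}T_i=T_{i+1}T_iT_{i+1}$). Ehrenborg's flag quasisymmetric function is $F_P(x)=\sum x_1^{\mathrm{rk}(t_0,t_1)}x_2^{\mathrm{rk}(t_1,t_2)}\cdots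 x_k^{\mathrm{rk}(t_{k-1},t_k)}$, summed over all multichains $\hat0=t_0\le t_1\le\cdots\le t_{k-1}<t_k=\hat1$ (all $k\ge1$). For $S\subseteq[n-1]$, Gessel's fundamental quasisymmetric function is $L_{S,n}(x)=\sum x_{i_1}\cdots x_{i_n}$ over $1\le i_1\le\cdots\le i_n$ with $i_j<i_{j+1}$ whenever $j\in S$. The involution $\omega$ on quasisymmetric functions of degree $n$ is the linear map with $\omega(L_{S,n})=L_{[n-1]\setminus S,n}$. For $S\subseteq[n-1]$, $\chi_S$ is the character of the one-dimensional representation of $\mathcal{H}_n(0)$ with $T_i\mapsto -1$ if $i\in S$ and $T_i\mapsto 0$ otherwise; the characteristic is the linear map with $\mathrm{ch}(\chi_S)=L_{S,n}$, extended linearly to characters written as combinations $\sum_S c_S\chi_S$. *)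

theory Defs
  imports "HOL-Library.Multiset"
begin

definition covers :: "'a set \<Rightarrow> ('a \<Rightarrow> 'a \<Rightarrow> bool) \<Rightarrow> 'a \<Rightarrow> 'a \<Rightarrow> bool" where
  "covers P le x y \<longleftrightarrow> x \<in> P \<and> y \<in> P \<and> le x y \<and> x \<noteq> y \<and>
     \<not> (\<exists>z\<in>P. le x z \<and> le z y \<and> z \<noteq> x \<and> z \<noteq> y)"

definition bounded_graded_poset ::
  "'a set \<Rightarrow> ('a \<Rightarrow> 'a \<Rightarrow> bool) \<Rightarrow> ('a \<Rightarrow> nat) \<Rightarrow> 'a \<Rightarrow> 'a \<Rightarrow> nat \<Rightarrow> bool" where
  "bounded_graded_poset P le rk zero one n \<longleftrightarrow>
     finite P \<and>
     (\<forall>x\<in>P. le x x) \<and>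
     (\<forall>x\<in>P. \<forall>y\<in>P. le x y \<and> le y x \<longrightarrow> x = y) \<and>
     (\<forall>x\<in>P. \<forall>y\<in>P. \<forall>z\<in>P. le x y \<and> le y z \<longrightarrow> le x z) \<and>
     zero \<in> P \<and> one \<in> P \<and> (\<forall>x\<in>P. le zero x \<and> le x one) \<and>
     rk zero = 0 \<and> rk one = n \<and>
     (\<forall>x y. covers P le x y \<longrightarrow> rk y = rk x + 1)"

definition max_chains :: "'a set \<Rightarrow> ('a \<Rightarrow> 'a \<Rightarrow> bool) \<Rightarrow> 'a \<Rightarrow> 'a \<Rightarrow> 'a list set" where
  "max_chains P le s t = {c. c \<noteq> [] \<and> hd c = s \<and> last c = t \<and> set c \<subseteq> P \<and>
      (\<forall>j. Suc j < length c \<longrightarrow> covers P le (c ! j) (c ! Suc j))}"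

definition labels :: "('a \<Rightarrow> 'a \<Rightarrow> nat) \<Rightarrow> 'a list \<Rightarrow> nat list" where
  "labels lab c = map (\<lambda>j. lab (c ! j) (c ! Suc j)) [0..<length c - 1]"

definition Sn_EL_labeling ::
  "'a set \<Rightarrow> ('a \<Rightarrow> 'a \<Rightarrow> bool) \<Rightarrow> 'a \<Rightarrow> 'a \<Rightarrow> nat \<Rightarrow> ('a \<Rightarrow> 'a \<Rightarrow> nat) \<Rightarrow> bool" where
  "Sn_EL_labeling P le zero one n lab \<longleftrightarrow>
     (\<forall>s\<in>P. \<forall>t\<in>P. le s t \<longrightarrow>
        (\<exists>!c. c \<in> max_chains P le s t \<and> sorted (labels lab c)) \<and>
        (\<forall>c\<in>max_chains P le s t. sorted (labels lab c) \<longrightarrow>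
           (\<forall>c'\<in>max_chains P le s t. lexordp_eq (labels lab c) (labels lab c')))) \<and>
     (\<forall>m\<in>max_chains P le zero one. mset (labels lab m) = mset [1..<n+1])"

text \<open>U_i on maximal chains (ranks 0..n are list positions 0..n).\<close>
definition Uop :: "'a set \<Rightarrow> ('a \<Rightarrow> 'a \<Rightarrow> bool) \<Rightarrow> 'a \<Rightarrow> 'a \<Rightarrow> ('a \<Rightarrow> 'a \<Rightarrow> nat)
    \<Rightarrow> nat \<Rightarrow> 'a list \<Rightarrow> 'a list" where
  "Uop P le zero one lab i m = (THE m'. m' \<in> max_chains P le zero one \<and>
      length m' = length m \<and> (\<forall>j. j \<noteq> i \<longrightarrow> m' ! j = m ! j) \<and>
      lab (m' ! (i - 1)) (m' ! i) < lab (m' ! i) (m' ! Suc i))"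

text \<open>The character chi_P of the representation of H_n(0) on C M(P), with T_i acting
  as -U_i, evaluated on the word T_{w1} T_{w2} ... T_{wk} (a list of generator indices):
  the trace of the operator (-1)^k U_{w1} o ... o U_{wk}.\<close>
definition chiP :: "'a set \<Rightarrow> ('a \<Rightarrow> 'a \<Rightarrow> bool) \<Rightarrow> 'a \<Rightarrow> 'a \<Rightarrow> ('a \<Rightarrow> 'a \<Rightarrow> nat)
    \<Rightarrow> nat list \<Rightarrow> int" where
  "chiP P le zero one lab w = (-1) ^ length w *
     (\<Sum>m\<in>max_chains P le zero one.
        (if foldr (Uop P le zero one lab) w m = m then 1 else 0))"

definition chiS :: "nat set \<Rightarrow> nat list \<Rightarrow> int" where
  "chiS S w = (\<Prod>i\<leftarrow>w. if i \<in> S then -1 else 0)"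

text \<open>A formal power series in x_1, x_2, ... is represented by its coefficient function on
  exponent vectors alpha :: nat => nat; alpha v is the exponent of the variable x_{v+1}.\<close>

definition fundL :: "nat set \<Rightarrow> nat \<Rightarrow> (nat \<Rightarrow> nat) \<Rightarrow> int" where
  "fundL S n \<alpha> = int (card {i :: nat list. length i = n \<and> sorted i \<and>
      (\<forall>j\<in>S. i ! (j - 1) < i ! j) \<and> (\<forall>v. count (mset i) v = \<alpha> v)})"

text \<open>Ehrenborg's flag quasisymmetric function: the term of the multichain
  t_0 <= ... <= t_{k-1} < t_k is the monomial with exponent rk(t_v,t_{v+1}) at x_{v+1}.\<close>
definition flagF :: "'a set \<Rightarrow> ('a \<Rightarrow> 'a \<Rightarrow> bool) \<Rightarrow> ('a \<Rightarrow> nat) \<Rightarrow> 'a \<Rightarrow> 'a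
    \<Rightarrow> (nat \<Rightarrow> nat) \<Rightarrow> int" where
  "flagF P le rk zero one \<alpha> = int (card {t. \<exists>k\<ge>1. length t = Suc k \<and> set t \<subseteq> P \<and>
      t ! 0 = zero \<and> t ! k = one \<and>
      (\<forall>j<k. le (t ! j) (t ! Suc j)) \<and> t ! (k - 1) \<noteq> one \<and>
      (\<forall>v<k. \<alpha> v = rk (t ! Suc v) - rk (t ! v)) \<and> (\<forall>v\<ge>k. \<alpha> v = 0)})"

text \<open>Expansion coefficients in the fundamental basis (unique when they exist).\<close>
definition qsym_coeffs :: "nat \<Rightarrow> ((nat \<Rightarrow> nat) \<Rightarrow> int) \<Rightarrow> nat set \<Rightarrow> int" where
  "qsym_coeffs n f = (THE d. (\<forall>S. S \<notin> Pow {1..<n} \<longrightarrow> d S = 0) \<and>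
      f = (\<lambda>\<alpha>. \<Sum>S\<in>Pow {1..<n}. d S * fundL S n \<alpha>))"

definition omegaQ :: "nat \<Rightarrow> ((nat \<Rightarrow> nat) \<Rightarrow> int) \<Rightarrow> (nat \<Rightarrow> nat) \<Rightarrow> int" where
  "omegaQ n f = (\<lambda>\<alpha>. \<Sum>S\<in>Pow {1..<n}. qsym_coeffs n f S * fundL ({1..<n} - S) n \<alpha>)"

definition char_coeffs :: "nat \<Rightarrow> (nat list \<Rightarrow> int) \<Rightarrow> nat set \<Rightarrow> int" where
  "char_coeffs n \<chi> = (THE d. (\<forall>S. S \<notin> Pow {1..<n} \<longrightarrow> d S = 0) \<and>
      (\<forall>w. set w \<subseteq> {1..<n} \<longrightarrow> \<chi> w = (\<Sum>S\<in>Pow {1..<n}. d S * chiS S w)))"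

definition chQ :: "nat \<Rightarrow> (nat list \<Rightarrow> int) \<Rightarrow> (nat \<Rightarrow> nat) \<Rightarrow> int" where
  "chQ n \<chi> = (\<lambda>\<alpha>. \<Sum>S\<in>Pow {1..<n}. char_coeffs n \<chi> S * fundL S n \<alpha>)"

end

theory Submission
  imports Defs
begin

text \<open>Both sides are expanded over the maximal chains m, according to the descent set
  Des(m) of the label permutation of m.
  On the representation side, U_i never moves a chain up in the lexicographic order of label
  words and fixes m exactly when i is an ascent of m. Hence a word fixes m under the composite
  operator iff all its letters are ascents of m, and chi_P is the sum over m of chi_Asc(m).
  On the flag side, the multichains whose rank jumps are the multiplicities of a weakly
  increasing word correspond, by restriction to the ranks they visit, to the maximal chains
  whose descents lie among the strict ascents of the word; the inverse fills each gap with its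
  unique increasing chain. This is the expansion of F_P as the sum over m of L_Des(m).
  The fundamental quasisymmetric functions and the characters chi_S are linearly independent,
  so the coefficients can be read off, and omega exchanges Des(m) with its complement Asc(m).\<close>

section \<open>Descent sets and linear independence\<close>

lemma sum_by_fibres:
  fixes g :: "'b \<Rightarrow> 'c::comm_semiring_1"
  assumes "finite A" "finite B" "f ` A \<subseteq> B"
  shows "(\<Sum>x\<in>A. g (f x)) = (\<Sum>y\<in>B. of_nat (card {x\<in>A. f x = y}) * g y)"
proof -
  have "(\<Sum>x\<in>A. g (f x)) = (\<Sum>y\<in>B. \<Sum>x\<in>{x\<in>A. f x = y}. g (f x))"
    using sum.group[OF assms, of "\<lambda>x. g (f x)"] by simp
  also have "\<dots> = (\<Sum>y\<in>B. of_nat (card {x\<in>A. f x = y}) * g y)"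
    by (rule sum.cong) auto
  finally show ?thesis .
qed

lemma eq_0_if_sums_over_subsets_eq_0:
  fixes d :: "'a set \<Rightarrow> 'b::comm_monoid_add"
  assumes U: "finite U" and sums: "\<And>A. A \<subseteq> U \<Longrightarrow> (\<Sum>S\<in>Pow A. d S) = 0" and "A \<subseteq> U"
  shows "d A = 0"
  using \<open>A \<subseteq> U\<close>
proof (induction "card A" arbitrary: A rule: less_induct)
  case (less A)
  have finA: "finite A" using U less.prems finite_subset by blast
  have "d S = 0" if "S \<in> Pow A - {A}" for S
  proof -
    have "S \<subset> A" using that by auto
    then show ?thesis using less finA psubset_card_mono by (meson order.trans psubset_imp_subset)
  qed
  then have "(\<Sum>S\<in>Pow A. d S) = d A"
    using sum.remove[of "Pow A" A d] finA by simp
  then show ?case using sums less.prems by simp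
qed

lemma eq_0_if_sums_over_supersets_eq_0:
  fixes d :: "'a set \<Rightarrow> 'b::comm_monoid_add"
  assumes U: "finite U" and sums: "\<And>A. A \<subseteq> U \<Longrightarrow> (\<Sum>S | A \<subseteq> S \<and> S \<subseteq> U. d S) = 0"
    and "A \<subseteq> U"
  shows "d A = 0"
  using \<open>A \<subseteq> U\<close>
proof (induction "card (U - A)" arbitrary: A rule: less_induct)
  case (less A)
  have fin: "finite {S. A \<subseteq> S \<and> S \<subseteq> U}" using U by simp
  have "d S = 0" if "S \<in> {S. A \<subseteq> S \<and> S \<subseteq> U} - {A}" for S
  proof -
    have "U - S \<subset> U - A" using that less.prems by blast
    then show ?thesis using less that U by (simp add: psubset_card_mono)
  qed
  then have "(\<Sum>S | A \<subseteq> S \<and> S \<subseteq> U. d S) = d A"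
    using sum.remove[OF fin, of A d] less.prems by simp
  then show ?case using sums less.prems by simp
qed

definition list_ascents :: "'a::linorder list \<Rightarrow> nat set" where
  "list_ascents xs = {j\<in>{1..<length xs}. xs ! (j - 1) < xs ! j}"

definition list_descents :: "'a::linorder list \<Rightarrow> nat set" where
  "list_descents xs = {j\<in>{1..<length xs}. xs ! j < xs ! (j - 1)}"

lemma sorted_iff_list_descents_empty: "sorted xs \<longleftrightarrow> list_descents xs = {}"
proof -
  have "list_descents xs = {} \<longleftrightarrow> (\<forall>j. 1 \<le> j \<and> j < length xs \<longrightarrow> \<not> xs ! j < xs ! (j - 1))"
    by (auto simp: list_descents_def)
  also have "\<dots> \<longleftrightarrow> (\<forall>i. Suc i < length xs \<longrightarrow> \<not> xs ! Suc i < xs ! i)"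
  proof (intro iffI allI impI)
    fix i assume "\<forall>j. 1 \<le> j \<and> j < length xs \<longrightarrow> \<not> xs ! j < xs ! (j - 1)" "Suc i < length xs"
    then show "\<not> xs ! Suc i < xs ! i" by force
  next
    fix j assume "\<forall>i. Suc i < length xs \<longrightarrow> \<not> xs ! Suc i < xs ! i" "1 \<le> j \<and> j < length xs"
    then show "\<not> xs ! j < xs ! (j - 1)" by (cases j) auto
  qed
  finally show ?thesis by (simp add: sorted_iff_nth_Suc not_less)
qed

lemma list_descents_append:
  "list_descents (xs @ ys) \<subseteq> list_descents xs \<union> {length xs} \<union> (+) (length xs) ` list_descents ys"
proof
  fix j assume j: "j \<in> list_descents (xs @ ys)"
  consider "j < length xs" | "j = length xs" | "length xs < j" by linarith
  then show "j \<in> list_descents xs \<union> {length xs} \<union> (+) (length xs) ` list_descents ys"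
  proof cases
    case 1
    then have "j - 1 < length xs" by simp
    then show ?thesis using j 1 by (simp add: list_descents_def nth_append)
  next
    case 3
    then have "\<not> j - 1 < length xs" "j - 1 - length xs = j - length xs - 1" by auto
    then have "j - length xs \<in> list_descents ys"
      using j 3 by (simp add: list_descents_def nth_append) arith
    then show ?thesis using 3 by (auto intro!: image_eqI[of _ _ "j - length xs"])
  qed simp
qed

lemma list_descents_drop_take:
  assumes "j \<in> list_descents (drop a (take b xs))"
  shows "a + j \<in> list_descents xs"
proof -
  have j: "1 \<le> j" "a + j < b" "a + j < length xs"
    and "drop a (take b xs) ! j < drop a (take b xs) ! (j - 1)"
    using assms by (auto simp: list_descents_def)
  moreover have "a + (j - 1) = a + j - 1" using j by simp
  ultimately show ?thesis by (simp add: list_descents_def)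
qed

lemma lexordp_if_take_eq_nth_less:
  fixes xs ys :: "'a::linorder list"
  assumes "take k xs = take k ys" "k < length xs" "k < length ys" "xs ! k < ys ! k"
  shows "ord_class.lexordp xs ys"
proof -
  have "xs = take k xs @ xs ! k # drop (Suc k) xs" "ys = take k xs @ ys ! k # drop (Suc k) ys"
    using id_take_nth_drop assms(1-3) by metis+
  then show ?thesis using lexordp_append_left_rightI[OF assms(4)] by metis
qed

lemma chiS_eq: "chiS S w = (if set w \<subseteq> S then (-1) ^ length w else 0)"
  unfolding chiS_def by (induction w) auto

text \<open>Evaluating at a word listing A picks out, up to sign, the sum of the coefficients of
  the supersets of A.\<close>
lemma chiS_linear_independent:
  fixes d :: "nat set \<Rightarrow> int"
  assumes vanish: "\<And>w. set w \<subseteq> {1..<n} \<Longrightarrow> (\<Sum>S\<in>Pow {1..<n}. d S * chiS S w) = 0"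
    and "A \<subseteq> {1..<n}"
  shows "d A = 0"
proof (rule eq_0_if_sums_over_supersets_eq_0[of "{1..<n}"])
  fix A assume A: "A \<subseteq> {1..<n}"
  define w where "w = sorted_list_of_set A"
  have "finite A" using A finite_subset[of A "{1..<n}"] by blast
  then have w: "set w = A" "length w = card A" unfolding w_def by auto
  have "0 = (\<Sum>S\<in>Pow {1..<n}. d S * chiS S w)" using vanish A w by simp
  also have "\<dots> = (-1) ^ card A * (\<Sum>S\<in>Pow {1..<n}. if A \<subseteq> S then d S else 0)"
    unfolding sum_distrib_left by (rule sum.cong) (auto simp: chiS_eq w)
  also have "(\<Sum>S\<in>Pow {1..<n}. if A \<subseteq> S then d S else 0) = (\<Sum>S | A \<subseteq> S \<and> S \<subseteq> {1..<n}. d S)"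
    by (simp add: sum.If_cases Int_def conj_commute)
  finally show "(\<Sum>S | A \<subseteq> S \<and> S \<subseteq> {1..<n}. d S) = 0" by simp
qed (use assms in simp_all)

lemma char_coeffs_eqI:
  fixes d :: "nat set \<Rightarrow> int"
  assumes "\<And>S. S \<notin> Pow {1..<n} \<Longrightarrow> d S = 0"
    and "\<And>w. set w \<subseteq> {1..<n} \<Longrightarrow> \<chi> w = (\<Sum>S\<in>Pow {1..<n}. d S * chiS S w)"
  shows "char_coeffs n \<chi> = d"
  unfolding char_coeffs_def
proof (rule the_equality)
  fix d' assume d': "(\<forall>S. S \<notin> Pow {1..<n} \<longrightarrow> d' S = 0) \<and>
    (\<forall>w. set w \<subseteq> {1..<n} \<longrightarrow> \<chi> w = (\<Sum>S\<in>Pow {1..<n}. d' S * chiS S w))"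
  have "(\<Sum>S\<in>Pow {1..<n}. (d' S - d S) * chiS S w) = 0" if "set w \<subseteq> {1..<n}" for w
    using d' assms(2)[OF that] that by (simp add: left_diff_distrib sum_subtractf)
  then have "d' S - d S = 0" for S
    using chiS_linear_independent[of n "\<lambda>S. d' S - d S" S] d' assms(1) by fastforce
  then show "d' = d" by auto
qed (use assms in auto)

definition staircase :: "nat set \<Rightarrow> nat \<Rightarrow> nat list" where
  "staircase A n = map (\<lambda>j. card {a\<in>A. a \<le> j}) [0..<n]"

lemma staircase:
  assumes "A \<subseteq> {1..<n}"
  shows "sorted (staircase A n)" "length (staircase A n) = n" "list_ascents (staircase A n) = A"
proof -
  have finA: "finite A" using assms finite_subset by blast
  show len: "length (staircase A n) = n" by (simp add: staircase_def)
  show "sorted (staircase A n)"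
    unfolding sorted_iff_nth_mono using finA by (auto simp: staircase_def intro!: card_mono)
  have "staircase A n ! (j - 1) < staircase A n ! j \<longleftrightarrow> j \<in> A" if j: "j \<in> {1..<n}" for j
  proof -
    have "{a\<in>A. a \<le> j} = {a\<in>A. a \<le> j - 1} \<union> (if j \<in> A then {j} else {})"
      using j by (auto dest: le_neq_implies_less)
    then have "card {a\<in>A. a \<le> j} = card {a\<in>A. a \<le> j - 1} + (if j \<in> A then 1 else 0)"
      using finA j by (auto simp: card_insert_if)
    moreover have "staircase A n ! (j - 1) = card {a\<in>A. a \<le> j - 1}"
      "staircase A n ! j = card {a\<in>A. a \<le> j}"
      using j by (auto simp: staircase_def)
    ultimately show ?thesis by simp
  qed
  then show "list_ascents (staircase A n) = A"
    using assms unfolding list_ascents_def len by auto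
qed

lemma fundL_count_sorted:
  assumes "sorted xs" "length xs = n" "S \<subseteq> {1..<n}"
  shows "fundL S n (count (mset xs)) = (if S \<subseteq> list_ascents xs then 1 else 0)"
proof -
  have "ys = xs" if "sorted ys" "count (mset ys) = count (mset xs)" for ys
    using that assms(1) by (metis multiset_eqI properties_for_sort sorted_sort_id)
  then have "{ys :: nat list. length ys = n \<and> sorted ys \<and> (\<forall>j\<in>S. ys ! (j - 1) < ys ! j) \<and>
      (\<forall>v. count (mset ys) v = count (mset xs) v)} =
      (if \<forall>j\<in>S. xs ! (j - 1) < xs ! j then {xs} else {})"
    using assms(1,2) by (auto simp: fun_eq_iff)
  moreover have "(\<forall>j\<in>S. xs ! (j - 1) < xs ! j) \<longleftrightarrow> S \<subseteq> list_ascents xs"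
    using assms(2,3) by (auto simp: list_ascents_def)
  ultimately show ?thesis unfolding fundL_def by simp
qed

lemma fundL_eq_0:
  assumes "\<nexists>xs. length xs = n \<and> sorted xs \<and> \<alpha> = count (mset xs)"
  shows "fundL S n \<alpha> = 0"
proof -
  have no_monomial: "{xs :: nat list. length xs = n \<and> sorted xs \<and> (\<forall>j\<in>S. xs ! (j - 1) < xs ! j) \<and>
      (\<forall>v. count (mset xs) v = \<alpha> v)} = {}"
    using assms by (auto simp: fun_eq_iff)
  show ?thesis unfolding fundL_def no_monomial by simp
qed

text \<open>Evaluating at the monomial of the staircase word with ascent set A picks out the
  sum of the coefficients of the subsets of A.\<close>
lemma fundL_linear_independent:
  fixes d :: "nat set \<Rightarrow> int"
  assumes vanish: "\<And>\<alpha>. (\<Sum>S\<in>Pow {1..<n}. d S * fundL S n \<alpha>) = 0" and "A \<subseteq> {1..<n}"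
  shows "d A = 0"
proof (rule eq_0_if_sums_over_subsets_eq_0[of "{1..<n}"])
  fix A assume A: "A \<subseteq> {1..<n}"
  note st = staircase[OF A]
  have "0 = (\<Sum>S\<in>Pow {1..<n}. d S * fundL S n (count (mset (staircase A n))))"
    using vanish by simp
  also have "\<dots> = (\<Sum>S\<in>Pow {1..<n}. if S \<subseteq> A then d S else 0)"
    by (rule sum.cong) (auto simp: fundL_count_sorted st)
  also have "\<dots> = (\<Sum>S\<in>Pow A. d S)"
  proof -
    have "Pow {1..<n} \<inter> {S. S \<subseteq> A} = Pow A" using A by auto
    then show ?thesis by (simp add: sum.If_cases)
  qed
  finally show "(\<Sum>S\<in>Pow A. d S) = 0" by simp
qed (use assms in simp_all)

lemma qsym_coeffs_eqI:
  fixes d :: "nat set \<Rightarrow> int"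
  assumes "\<And>S. S \<notin> Pow {1..<n} \<Longrightarrow> d S = 0"
    and "\<And>\<alpha>. f \<alpha> = (\<Sum>S\<in>Pow {1..<n}. d S * fundL S n \<alpha>)"
  shows "qsym_coeffs n f = d"
  unfolding qsym_coeffs_def
proof (rule the_equality)
  fix d' assume d': "(\<forall>S. S \<notin> Pow {1..<n} \<longrightarrow> d' S = 0) \<and>
    f = (\<lambda>\<alpha>. \<Sum>S\<in>Pow {1..<n}. d' S * fundL S n \<alpha>)"
  have "(\<Sum>S\<in>Pow {1..<n}. (d' S - d S) * fundL S n \<alpha>) = 0" for \<alpha>
    using d' assms(2)[of \<alpha>] by (simp add: left_diff_distrib sum_subtractf)
  then have "d' S - d S = 0" for S
    using fundL_linear_independent[of "\<lambda>S. d' S - d S" n S] d' assms(1) by fastforce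
  then show "d' = d" by auto
qed (use assms in auto)

lemma length_filter_less_Suc:
  "length (filter (\<lambda>x. x < Suc v) xs) = length (filter (\<lambda>x. x < v) xs) + count (mset xs) v"
  by (induction xs) auto

lemma sorted_nth_less_iff:
  "sorted xs \<Longrightarrow> j < length xs \<Longrightarrow> xs ! j < v \<longleftrightarrow> j < length (filter (\<lambda>x. x < v) xs)"
proof (induction xs arbitrary: j)
  case (Cons a xs)
  have xs: "sorted xs" "\<forall>y\<in>set xs. a \<le> y" using Cons.prems by auto
  show ?case
  proof (cases "a < v")
    case True
    then show ?thesis using Cons xs by (cases j) auto
  next
    case False
    have "a \<le> (a # xs) ! j"
      using xs Cons.prems by (cases j) auto
    moreover have "filter (\<lambda>x. x < v) xs = []"
      using False xs by (auto simp: filter_empty_conv)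
    ultimately show ?thesis using False by simp
  qed
qed simp

definition weight_list :: "(nat \<Rightarrow> nat) \<Rightarrow> nat \<Rightarrow> nat list" where
  "weight_list \<alpha> k = concat (map (\<lambda>v. replicate (\<alpha> v) v) [0..<k])"

lemma weight_list_Suc: "weight_list \<alpha> (Suc k) = weight_list \<alpha> k @ replicate (\<alpha> k) k"
  by (simp add: weight_list_def)

lemma weight_list:
  "sorted (weight_list \<alpha> k)" "length (weight_list \<alpha> k) = (\<Sum>v<k. \<alpha> v)"
  "count (mset (weight_list \<alpha> k)) v = (if v < k then \<alpha> v else 0)"
proof -
  have below: "x < k" if "x \<in> set (weight_list \<alpha> k)" for x k
    using that by (auto simp: weight_list_def)
  show "sorted (weight_list \<alpha> k)"
    by (induction k) (auto simp: weight_list_Suc sorted_append dest!: below,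
        simp add: weight_list_def)
  show "length (weight_list \<alpha> k) = (\<Sum>v<k. \<alpha> v)"
    by (induction k) (auto simp: weight_list_Suc, simp add: weight_list_def)
  show "count (mset (weight_list \<alpha> k)) v = (if v < k then \<alpha> v else 0)"
    by (induction k) (auto simp: weight_list_Suc, simp add: weight_list_def)
qed

lemma length_labels: "length (labels lab c) = length c - 1"
  by (simp add: labels_def)

lemma nth_labels: "j < length c - 1 \<Longrightarrow> labels lab c ! j = lab (c ! j) (c ! Suc j)"
  by (simp add: labels_def)

lemma labels_singleton: "labels lab [x] = []"
  by (simp add: labels_def)

lemma labels_Cons_Cons: "labels lab (x # y # zs) = lab x y # labels lab (y # zs)"
  unfolding labels_def by (simp add: upt_conv_Cons map_Suc_upt[symmetric] del: upt_Suc)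

lemma labels_append_tl:
  "c1 \<noteq> [] \<Longrightarrow> c2 \<noteq> [] \<Longrightarrow> last c1 = hd c2 \<Longrightarrow>
    labels lab (c1 @ tl c2) = labels lab c1 @ labels lab c2"
proof (induction c1 rule: induct_list012)
  case (2 x)
  then show ?case by (cases c2) (auto simp: labels_singleton)
next
  case (3 x y zs)
  then show ?case by (simp add: labels_Cons_Cons)
qed simp

lemma set_append_tl: "c2 \<noteq> [] \<Longrightarrow> hd c2 \<in> set c1 \<Longrightarrow> set (c1 @ tl c2) = set c1 \<union> set c2"
  by (cases c2) auto

definition chain_segment :: "'b list \<Rightarrow> nat \<Rightarrow> nat \<Rightarrow> 'b list" where
  "chain_segment c a b = drop a (take (Suc b) c)"

lemma chain_segment:
  assumes "a \<le> b" "b < length c"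
  shows "length (chain_segment c a b) = b - a + 1"
    and "\<And>j. j \<le> b - a \<Longrightarrow> chain_segment c a b ! j = c ! (a + j)"
  using assms by (simp_all add: chain_segment_def)

lemma labels_chain_segment:
  assumes "a \<le> b" "b < length c"
  shows "labels lab (chain_segment c a b) = drop a (take b (labels lab c))"
proof (rule nth_equalityI)
  show "length (labels lab (chain_segment c a b)) = length (drop a (take b (labels lab c)))"
    using assms by (simp add: length_labels chain_segment)
  fix j assume "j < length (labels lab (chain_segment c a b))"
  then have "j < b - a" using assms by (simp add: length_labels chain_segment)
  then show "labels lab (chain_segment c a b) ! j = drop a (take b (labels lab c)) ! j"
    using assms by (simp add: nth_labels length_labels chain_segment)
qed

section \<open>Maximal chains of a poset with an S_n EL-labeling\<close>

locale EL_poset =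
  fixes P :: "'a set" and le :: "'a \<Rightarrow> 'a \<Rightarrow> bool" and rk :: "'a \<Rightarrow> nat"
    and zero one :: 'a and n :: nat and lab :: "'a \<Rightarrow> 'a \<Rightarrow> nat"
  assumes graded: "bounded_graded_poset P le rk zero one n"
    and rank_pos: "1 \<le> n"
    and EL: "Sn_EL_labeling P le zero one n lab"
begin

abbreviation MC :: "'a \<Rightarrow> 'a \<Rightarrow> 'a list set" where
  "MC \<equiv> max_chains P le"

abbreviation M :: "'a list set" where
  "M \<equiv> max_chains P le zero one"

lemma finite_P: "finite P"
  and poset_refl: "x \<in> P \<Longrightarrow> le x x"
  and poset_trans: "x \<in> P \<Longrightarrow> y \<in> P \<Longrightarrow> z \<in> P \<Longrightarrow> le x y \<Longrightarrow> le y z \<Longrightarrow> le x z"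
  and one_in: "one \<in> P"
  and le_one: "x \<in> P \<Longrightarrow> le x one"
  and rk_zero: "rk zero = 0" and rk_one: "rk one = n"
  and rk_covers: "covers P le x y \<Longrightarrow> rk y = rk x + 1"
  using graded unfolding bounded_graded_poset_def by blast+

lemma increasing_chain_unique:
  "s \<in> P \<Longrightarrow> t \<in> P \<Longrightarrow> le s t \<Longrightarrow> \<exists>!c. c \<in> MC s t \<and> sorted (labels lab c)"
  using EL unfolding Sn_EL_labeling_def by blast

lemma increasing_chain_lex_least:
  "s \<in> P \<Longrightarrow> t \<in> P \<Longrightarrow> le s t \<Longrightarrow> c \<in> MC s t \<Longrightarrow> sorted (labels lab c) \<Longrightarrow>
    c' \<in> MC s t \<Longrightarrow> lexordp_eq (labels lab c) (labels lab c')"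
  using EL unfolding Sn_EL_labeling_def by blast

lemma labels_perm: "m \<in> M \<Longrightarrow> mset (labels lab m) = mset [1..<n+1]"
  using EL unfolding Sn_EL_labeling_def by blast

lemma max_chains_iff:
  "c \<in> MC s t \<longleftrightarrow> c \<noteq> [] \<and> hd c = s \<and> last c = t \<and> set c \<subseteq> P \<and> successively (covers P le) c"
  by (simp add: max_chains_def successively_conv_nth)

lemma max_chainsD:
  assumes "c \<in> MC s t"
  shows "c \<noteq> []" "hd c = s" "last c = t" "set c \<subseteq> P"
    "\<And>j. Suc j < length c \<Longrightarrow> covers P le (c ! j) (c ! Suc j)"
  using assms unfolding max_chains_def by auto

lemma max_chain_nth_in: "c \<in> MC s t \<Longrightarrow> j < length c \<Longrightarrow> c ! j \<in> P"
  using max_chainsD(4) nth_mem by blast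

lemma max_chain_first_last: "c \<in> MC s t \<Longrightarrow> c ! 0 = s \<and> c ! (length c - 1) = t"
  using max_chainsD(1-3) by (metis hd_conv_nth last_conv_nth)

lemma max_chain_rank:
  assumes "c \<in> MC s t"
  shows "j < length c \<Longrightarrow> rk (c ! j) = rk s + j"
proof (induction j)
  case 0
  then show ?case using max_chain_first_last[OF assms] by simp
next
  case (Suc j)
  then show ?case using max_chainsD(5)[OF assms, of j] rk_covers by auto
qed

lemma max_chain_length:
  assumes "c \<in> MC s t"
  shows "length c = rk t - rk s + 1" "rk s \<le> rk t"
proof -
  have "rk t = rk s + (length c - 1)"
    using max_chain_rank[OF assms, of "length c - 1"] max_chain_first_last[OF assms]
      max_chainsD(1)[OF assms] by simp
  then show "length c = rk t - rk s + 1" "rk s \<le> rk t"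
    using max_chainsD(1)[OF assms] by auto
qed

lemma max_chain_le:
  assumes c: "c \<in> MC s t"
  shows "i \<le> j \<Longrightarrow> j < length c \<Longrightarrow> le (c ! i) (c ! j)"
proof (induction j)
  case 0
  then show ?case using max_chain_nth_in[OF c] poset_refl by auto
next
  case (Suc j)
  show ?case
  proof (cases "i = Suc j")
    case True
    then show ?thesis using max_chain_nth_in[OF c] Suc poset_refl by auto
  next
    case False
    then have "le (c ! i) (c ! j)" "le (c ! j) (c ! Suc j)"
      using Suc max_chainsD(5)[OF c, of j] by (auto simp: covers_def)
    moreover have "c ! i \<in> P" "c ! j \<in> P" "c ! Suc j \<in> P"
      using max_chain_nth_in[OF c] Suc False by auto
    ultimately show ?thesis using poset_trans by blast
  qed
qed

lemma max_chain_ends: "c \<in> MC s t \<Longrightarrow> s \<in> P \<and> t \<in> P \<and> le s t"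
  using max_chain_first_last max_chain_nth_in max_chain_le max_chainsD(1)
  by (metis diff_less length_greater_0_conv less_one zero_le)

lemma max_chains_nonempty: "s \<in> P \<Longrightarrow> t \<in> P \<Longrightarrow> le s t \<Longrightarrow> MC s t \<noteq> {}"
  using increasing_chain_unique by blast

lemma rank_mono: "s \<in> P \<Longrightarrow> t \<in> P \<Longrightarrow> le s t \<Longrightarrow> rk s \<le> rk t"
  using max_chains_nonempty max_chain_length by blast

lemma rank_strict_mono:
  assumes "s \<in> P" "t \<in> P" "le s t" "s \<noteq> t"
  shows "rk s < rk t"
proof -
  obtain c where c: "c \<in> MC s t" using max_chains_nonempty assms by blast
  have "length c \<noteq> 1"
    using max_chain_first_last[OF c] assms(4) by auto
  then show ?thesis using max_chain_length[OF c] by auto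
qed

lemma max_chains_append:
  assumes c1: "c1 \<in> MC s u" and c2: "c2 \<in> MC u t"
  shows "c1 @ tl c2 \<in> MC s t"
proof -
  obtain c2' where c2': "c2 = u # c2'"
    using max_chainsD(1,2)[OF c2] by (cases c2) auto
  have "successively (covers P le) (c1 @ c2')"
    using c1 c2 c2' unfolding max_chains_iff
    by (auto simp: successively_append_iff successively_Cons)
  moreover have "last (c1 @ c2') = t"
    using c1 c2 c2' unfolding max_chains_iff by (cases "c2' = []") auto
  ultimately show ?thesis
    using c1 c2 c2' unfolding max_chains_iff by auto
qed

lemma chain_segment_max_chains:
  assumes c: "c \<in> MC s t" and ab: "a \<le> b" "b < length c"
  shows "chain_segment c a b \<in> MC (c ! a) (c ! b)"
proof -
  note seg = chain_segment[OF ab]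
  have "chain_segment c a b \<noteq> []" using seg(1) by auto
  moreover have "hd (chain_segment c a b) = c ! a" "last (chain_segment c a b) = c ! b"
    using seg ab calculation by (auto simp: hd_conv_nth last_conv_nth)
  moreover have "set (chain_segment c a b) \<subseteq> P"
    using max_chainsD(4)[OF c] unfolding chain_segment_def
    by (meson order.trans set_drop_subset set_take_subset)
  moreover have "covers P le (chain_segment c a b ! j) (chain_segment c a b ! Suc j)"
    if "Suc j < length (chain_segment c a b)" for j
    using that seg ab max_chainsD(5)[OF c, of "a + j"] by auto
  ultimately show ?thesis unfolding max_chains_def by blast
qed

lemma M_length: "m \<in> M \<Longrightarrow> length m = n + 1"
  using max_chain_length(1) rk_zero rk_one by fastforce

lemma M_rank: "m \<in> M \<Longrightarrow> j < length m \<Longrightarrow> rk (m ! j) = j"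
  using max_chain_rank rk_zero by simp

lemma M_finite: "finite M"
proof -
  have "M \<subseteq> {xs. set xs \<subseteq> P \<and> length xs = n + 1}" using M_length max_chainsD(4) by blast
  then show ?thesis using finite_lists_length_eq[OF finite_P] finite_subset by blast
qed

lemma distinct_labels: "m \<in> M \<Longrightarrow> distinct (labels lab m)"
  using labels_perm mset_eq_imp_distinct_iff by (metis distinct_upt)

section \<open>The 0-Hecke operators on maximal chains\<close>

definition descents :: "'a list \<Rightarrow> nat set" where
  "descents m = list_descents (labels lab m)"

lemma descents_subset: "m \<in> M \<Longrightarrow> descents m \<subseteq> {1..<n}"
  by (auto simp: descents_def list_descents_def length_labels M_length)

lemma adjacent_labels_neq:
  assumes "m \<in> M" "0 < i" "i < n"
  shows "lab (m ! (i - 1)) (m ! i) \<noteq> lab (m ! i) (m ! Suc i)"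
proof -
  have "labels lab m ! (i - 1) \<noteq> labels lab m ! i"
    using distinct_labels[OF assms(1)] M_length[OF assms(1)] assms(2,3)
    by (simp add: length_labels nth_eq_iff_index_eq)
  then show ?thesis using M_length[OF assms(1)] assms(2,3) by (simp add: nth_labels)
qed

lemma ascent_iff_not_descent:
  assumes "m \<in> M" "0 < i" "i < n"
  shows "lab (m ! (i - 1)) (m ! i) < lab (m ! i) (m ! Suc i) \<longleftrightarrow> i \<notin> descents m"
  using assms adjacent_labels_neq[OF assms] M_length[OF assms(1)]
  by (auto simp: descents_def list_descents_def length_labels nth_labels)

lemma window_max_chain:
  assumes "m \<in> M" "0 < i" "i < n"
  shows "[m ! (i - 1), m ! i, m ! Suc i] \<in> MC (m ! (i - 1)) (m ! Suc i)"
proof -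
  have "covers P le (m ! (i - 1)) (m ! i)" "covers P le (m ! i) (m ! Suc i)"
    using max_chainsD(5)[OF assms(1), of "i - 1"] max_chainsD(5)[OF assms(1), of i]
      M_length[OF assms(1)] assms(2,3) by auto
  then show ?thesis by (auto simp: max_chains_iff covers_def)
qed

lemma rank_two_max_chain:
  assumes "c \<in> MC s t" "rk t = rk s + 2"
  shows "c = [s, c ! 1, t]"
proof -
  have "length c = 3" using max_chain_length(1)[OF assms(1)] assms(2) by simp
  then show ?thesis using max_chain_first_last[OF assms(1)]
    by (intro nth_equalityI) (auto simp: less_Suc_eq numeral_eq_Suc)
qed

lemma max_chain_update:
  assumes m: "m \<in> M" and i: "0 < i" "i < n"
    and cov: "covers P le (m ! (i - 1)) y" "covers P le y (m ! Suc i)"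
  shows "m[i := y] \<in> M"
proof -
  note m_chain = max_chainsD[OF m]
  have len: "length m = n + 1" using M_length[OF m] .
  have "hd (m[i := y]) = zero" "last (m[i := y]) = one"
    using m_chain(1-3) len i by (auto simp: hd_conv_nth last_conv_nth nth_list_update)
  moreover have "set (m[i := y]) \<subseteq> P"
    using m_chain(4) cov set_update_subset_insert by (fastforce simp: covers_def)
  moreover have "covers P le (m[i := y] ! j) (m[i := y] ! Suc j)" if "Suc j < length (m[i := y])" for j
    using that m_chain(5)[of j] cov len i by (auto simp: nth_list_update)
  ultimately show ?thesis using m_chain(1) unfolding max_chains_def by auto
qed

definition ascent_variant :: "nat \<Rightarrow> 'a list \<Rightarrow> 'a list \<Rightarrow> bool" where
  "ascent_variant i m m' \<longleftrightarrow> m' \<in> M \<and> length m' = length m \<and> (\<forall>j. j \<noteq> i \<longrightarrow> m' ! j = m ! j) \<and>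
     lab (m' ! (i - 1)) (m' ! i) < lab (m' ! i) (m' ! Suc i)"

lemma ascent_variant_window:
  assumes m: "m \<in> M" and i: "0 < i" "i < n" and v: "ascent_variant i m m'"
  shows "[m ! (i - 1), m' ! i, m ! Suc i] \<in> MC (m ! (i - 1)) (m ! Suc i)"
    and "sorted (labels lab [m ! (i - 1), m' ! i, m ! Suc i])"
proof -
  from v have m': "m' \<in> M" "m' ! (i - 1) = m ! (i - 1)" "m' ! Suc i = m ! Suc i"
    and asc: "lab (m' ! (i - 1)) (m' ! i) < lab (m' ! i) (m' ! Suc i)"
    unfolding ascent_variant_def using i by auto
  show "[m ! (i - 1), m' ! i, m ! Suc i] \<in> MC (m ! (i - 1)) (m ! Suc i)"
    using window_max_chain[OF m'(1) i] m'(2,3) by simp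
  show "sorted (labels lab [m ! (i - 1), m' ! i, m ! Suc i])"
    using asc m'(2,3) by (simp add: labels_Cons_Cons labels_singleton)
qed

text \<open>The unique variant puts at rank i the middle element of the increasing chain
  of the rank-two interval between ranks i - 1 and i + 1.\<close>
lemma ascent_variant_unique:
  assumes m: "m \<in> M" and i: "0 < i" "i < n"
  shows "\<exists>!m'. ascent_variant i m m'"
proof -
  define s t where "s = m ! (i - 1)" and "t = m ! Suc i"
  have "s \<in> P \<and> t \<in> P \<and> le s t"
    using max_chain_ends[OF window_max_chain[OF assms]] by (simp add: s_def t_def)
  then obtain c where c: "c \<in> MC s t" "sorted (labels lab c)"
    and c_unique: "\<And>c'. c' \<in> MC s t \<Longrightarrow> sorted (labels lab c') \<Longrightarrow> c' = c"
    using increasing_chain_unique by blast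
  define y where "y = c ! 1"
  have "rk t = rk s + 2" using M_rank[OF m] M_length[OF m] i by (simp add: s_def t_def)
  then have c3: "c = [s, y, t]" using rank_two_max_chain[OF c(1)] by (simp add: y_def)
  have middle: "m' ! i = y" if "ascent_variant i m m'" for m'
    using c_unique[OF ascent_variant_window[OF m i that, folded s_def t_def]] c3 by simp
  have variant: "ascent_variant i m (m[i := y])"
  proof -
    have "covers P le s y" "covers P le y t"
      using max_chainsD(5)[OF c(1), of 0] max_chainsD(5)[OF c(1), of 1] c3 by auto
    then have my: "m[i := y] \<in> M" using max_chain_update[OF m i] by (simp add: s_def t_def)
    have len: "length m = n + 1" using M_length[OF m] .
    have "lab s y \<le> lab y t" using c(2) c3 by (simp add: labels_Cons_Cons labels_singleton)
    moreover have "lab s y \<noteq> lab y t"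
      using adjacent_labels_neq[OF my i] len i by (simp add: s_def t_def)
    ultimately show ?thesis
      using my len i unfolding ascent_variant_def by (simp add: s_def t_def)
  qed
  show ?thesis
  proof (rule ex1I[of _ "m[i := y]"])
    show "ascent_variant i m (m[i := y])" by (fact variant)
  next
    fix m' assume v: "ascent_variant i m m'"
    then have "length m' = length m" "\<And>j. j \<noteq> i \<Longrightarrow> m' ! j = m ! j"
      unfolding ascent_variant_def by auto
    then show "m' = m[i := y]"
      using middle[OF v] M_length[OF m] i by (intro nth_equalityI) (auto simp: nth_list_update)
  qed
qed

abbreviation U :: "nat \<Rightarrow> 'a list \<Rightarrow> 'a list" where
  "U i \<equiv> Uop P le zero one lab i"

lemma Uop_ascent_variant: "m \<in> M \<Longrightarrow> 0 < i \<Longrightarrow> i < n \<Longrightarrow> ascent_variant i m (U i m)"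
proof -
  have "U i m = (THE m'. ascent_variant i m m')"
    unfolding Uop_def ascent_variant_def by simp
  then show "m \<in> M \<Longrightarrow> 0 < i \<Longrightarrow> i < n \<Longrightarrow> ascent_variant i m (U i m)"
    using theI'[OF ascent_variant_unique] by simp
qed

lemma Uop_in_M: "m \<in> M \<Longrightarrow> 0 < i \<Longrightarrow> i < n \<Longrightarrow> U i m \<in> M"
  using Uop_ascent_variant unfolding ascent_variant_def by blast

lemma Uop_not_descent: "m \<in> M \<Longrightarrow> 0 < i \<Longrightarrow> i < n \<Longrightarrow> i \<notin> descents (U i m)"
  using Uop_ascent_variant ascent_iff_not_descent Uop_in_M unfolding ascent_variant_def by blast

lemma Uop_eq_self:
  assumes "m \<in> M" "0 < i" "i < n" "i \<notin> descents m"
  shows "U i m = m"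
proof -
  have "ascent_variant i m m"
    using assms ascent_iff_not_descent unfolding ascent_variant_def by blast
  then show ?thesis
    using Uop_ascent_variant[OF assms(1-3)] ascent_variant_unique[OF assms(1-3)] by blast
qed

text \<open>Both windows are maximal chains of the same rank-two interval, and the increasing
  one is lexicographically first.\<close>
lemma Uop_lex_less:
  assumes m: "m \<in> M" and i: "0 < i" "i < n" and desc: "i \<in> descents m"
  shows "ord_class.lexordp (labels lab (U i m)) (labels lab m)"
proof -
  define m' where "m' = U i m"
  have m': "m' \<in> M" "length m' = length m" "\<And>j. j \<noteq> i \<Longrightarrow> m' ! j = m ! j"
    and asc: "lab (m' ! (i - 1)) (m' ! i) < lab (m' ! i) (m' ! Suc i)"
    using Uop_ascent_variant[OF m i] unfolding m'_def ascent_variant_def by auto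
  define s t where "s = m ! (i - 1)" and "t = m ! Suc i"
  have ends: "m' ! (i - 1) = s" "m' ! Suc i = t" using m'(3) i by (auto simp: s_def t_def)
  have descent: "lab (m ! i) t < lab s (m ! i)"
    using ascent_iff_not_descent[OF m i] adjacent_labels_neq[OF m i] desc
    by (auto simp: s_def t_def)
  have w: "[s, m' ! i, t] \<in> MC s t" "[s, m ! i, t] \<in> MC s t"
    using window_max_chain[OF m'(1) i] window_max_chain[OF m i] ends by (simp_all add: s_def t_def)
  have "lexordp_eq [lab s (m' ! i), lab (m' ! i) t] [lab s (m ! i), lab (m ! i) t]"
    using increasing_chain_lex_least[OF _ _ _ w(1) _ w(2)] max_chain_ends[OF w(1)] asc ends
    by (simp add: labels_Cons_Cons labels_singleton)
  then have less: "lab s (m' ! i) < lab s (m ! i)"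
    using asc ends descent by auto
  have "labels lab m' ! j = labels lab m ! j" if "j < i - 1" for j
  proof -
    have "j < length m' - 1" "j < length m - 1" using that i M_length[OF m] m'(2) by simp_all
    then show ?thesis using m'(3)[of j] m'(3)[of "Suc j"] that by (simp add: nth_labels)
  qed
  then have "take (i - 1) (labels lab m') = take (i - 1) (labels lab m)"
    using M_length[OF m] m'(2) by (intro nth_equalityI) (simp_all add: length_labels)
  moreover have "i - 1 < length (labels lab m')" "i - 1 < length (labels lab m)"
    using i M_length[OF m] m'(2) by (simp_all add: length_labels)
  moreover have "labels lab m' ! (i - 1) < labels lab m ! (i - 1)"
    using less ends i m'(2) M_length[OF m] by (simp add: nth_labels s_def)
  ultimately show ?thesis
    unfolding m'_def by (rule lexordp_if_take_eq_nth_less)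
qed

lemma foldr_Uop:
  assumes "set w \<subseteq> {1..<n}" "m \<in> M"
  shows "foldr U w m \<in> M \<and>
    (foldr U w m = m \<or> ord_class.lexordp (labels lab (foldr U w m)) (labels lab m))"
  using assms(1)
proof (induction w)
  case (Cons i w)
  define x where "x = foldr U w m"
  have i: "0 < i" "i < n" and x: "x \<in> M" "x = m \<or> ord_class.lexordp (labels lab x) (labels lab m)"
    using Cons x_def by auto
  have "U i x = x \<or> ord_class.lexordp (labels lab (U i x)) (labels lab x)"
    using Uop_eq_self[OF x(1) i] Uop_lex_less[OF x(1) i] by blast
  then show ?case using x Uop_in_M[OF x(1) i] lexordp_trans unfolding x_def by auto
qed (simp add: assms)

text \<open>The composite fixes m only if every step does, because no step moves up in the
  lexicographic order of label words.\<close>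
lemma foldr_Uop_eq_self_iff:
  assumes "set w \<subseteq> {1..<n}" "m \<in> M"
  shows "foldr U w m = m \<longleftrightarrow> set w \<inter> descents m = {}"
  using assms(1)
proof (induction w)
  case (Cons i w)
  define x where "x = foldr U w m"
  have i: "0 < i" "i < n" and w: "set w \<subseteq> {1..<n}" using Cons.prems by auto
  have x: "x \<in> M" "x = m \<or> ord_class.lexordp (labels lab x) (labels lab m)"
    using foldr_Uop[OF w assms(2)] x_def by auto
  show ?case
  proof
    assume "foldr U (i # w) m = m"
    then have Ux: "U i x = m" by (simp add: x_def)
    have "x = m"
    proof (rule ccontr)
      assume "x \<noteq> m"
      then have "ord_class.lexordp (labels lab m) (labels lab x)"
        using Uop_eq_self[OF x(1) i] Uop_lex_less[OF x(1) i] Ux by fastforce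
      then show False using x \<open>x \<noteq> m\<close> lexordp_antisym by blast
    qed
    then show "set (i # w) \<inter> descents m = {}"
      using Ux Uop_not_descent[OF x(1) i] Cons.IH w x_def by auto
  next
    assume "set (i # w) \<inter> descents m = {}"
    then show "foldr U (i # w) m = m"
      using Cons.IH w Uop_eq_self[OF assms(2) i] x_def by auto
  qed
qed simp

lemma chiP_eq_sum_chiS:
  assumes "set w \<subseteq> {1..<n}"
  shows "chiP P le zero one lab w = (\<Sum>m\<in>M. chiS ({1..<n} - descents m) w)"
  unfolding chiP_def sum_distrib_left
proof (rule sum.cong)
  fix m assume "m \<in> M"
  then show "(-1) ^ length w * (if foldr U w m = m then 1 else 0) = chiS ({1..<n} - descents m) w"
    using foldr_Uop_eq_self_iff[OF assms] assms by (auto simp: chiS_eq)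
qed simp

section \<open>The flag quasisymmetric function\<close>

definition multichains :: "(nat \<Rightarrow> nat) \<Rightarrow> 'a list set" where
  "multichains \<alpha> = {t. \<exists>k\<ge>1. length t = Suc k \<and> set t \<subseteq> P \<and>
      t ! 0 = zero \<and> t ! k = one \<and>
      (\<forall>j<k. le (t ! j) (t ! Suc j)) \<and> t ! (k - 1) \<noteq> one \<and>
      (\<forall>v<k. \<alpha> v = rk (t ! Suc v) - rk (t ! v)) \<and> (\<forall>v\<ge>k. \<alpha> v = 0)}"

lemma flagF_eq_card: "flagF P le rk zero one \<alpha> = int (card (multichains \<alpha>))"
  unfolding flagF_def multichains_def by simp

lemma multichain_ranks:
  assumes "t \<in> multichains \<alpha>"
  shows "\<exists>k\<ge>1. length t = Suc k \<and> set t \<subseteq> P \<and> t ! 0 = zero \<and> t ! k = one \<and>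
    (\<forall>j<k. le (t ! j) (t ! Suc j)) \<and> 0 < \<alpha> (k - 1) \<and> (\<forall>v\<ge>k. \<alpha> v = 0) \<and>
    (\<forall>v\<le>k. rk (t ! v) = (\<Sum>u<v. \<alpha> u))"
proof -
  obtain k where k: "k \<ge> 1" "length t = Suc k" "set t \<subseteq> P" "t ! 0 = zero" "t ! k = one"
    "\<forall>j<k. le (t ! j) (t ! Suc j)" "t ! (k - 1) \<noteq> one"
    "\<forall>v<k. \<alpha> v = rk (t ! Suc v) - rk (t ! v)" "\<forall>v\<ge>k. \<alpha> v = 0"
    using assms unfolding multichains_def by blast
  have in_P: "t ! v \<in> P" if "v \<le> k" for v
    using k(2,3) that by (simp add: subset_iff)
  have "rk (t ! v) = (\<Sum>u<v. \<alpha> u)" if "v \<le> k" for v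
    using that
  proof (induction v)
    case (Suc v)
    have "t ! v \<in> P" "t ! Suc v \<in> P" "le (t ! v) (t ! Suc v)" using in_P k(6) Suc.prems by auto
    then have "rk (t ! v) \<le> rk (t ! Suc v)" using rank_mono by blast
    then show ?case using Suc k(8) by simp
  qed (simp add: k(4) rk_zero)
  moreover have "rk (t ! (k - 1)) < rk (t ! k)"
    using rank_strict_mono[OF in_P[of "k - 1"] one_in le_one] in_P[of "k - 1"] k(5,7) by simp
  then have "0 < \<alpha> (k - 1)" using k(1,8) by (simp add: Suc_le_eq)
  ultimately show ?thesis using k by blast
qed

lemma multichains_empty_unless_sorted_type:
  assumes "multichains \<alpha> \<noteq> {}"
  shows "\<exists>xs. length xs = n \<and> sorted xs \<and> \<alpha> = count (mset xs)"
proof -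
  obtain t where "t \<in> multichains \<alpha>" using assms by blast
  then obtain k where k: "t ! k = one" "\<forall>v\<ge>k. \<alpha> v = 0" "rk (t ! k) = (\<Sum>u<k. \<alpha> u)"
    using multichain_ranks by blast
  then have "length (weight_list \<alpha> k) = n" "\<alpha> = count (mset (weight_list \<alpha> k))"
    using rk_one by (auto simp: weight_list fun_eq_iff)
  then show ?thesis using weight_list(1) by blast
qed

lemma max_chain_rank_ge: "c \<in> MC s t \<Longrightarrow> x \<in> set c \<Longrightarrow> rk s \<le> rk x"
  by (metis in_set_conv_nth le_add1 max_chain_rank)

lemma descents_append_increasing:
  assumes c: "c \<in> MC a b" "sorted (labels lab c)" and m: "m \<in> MC b u"
  shows "descents (c @ tl m) \<subseteq> {rk b - rk a} \<union> (+) (rk b - rk a) ` descents m"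
proof -
  have "length (labels lab c) = rk b - rk a"
    using max_chain_length(1)[OF c(1)] by (simp add: length_labels)
  moreover have "labels lab (c @ tl m) = labels lab c @ labels lab m"
    using labels_append_tl[of c m lab] max_chainsD(1-3)[OF c(1)] max_chainsD(1,2)[OF m] by simp
  ultimately show ?thesis
    using list_descents_append[of "labels lab c" "labels lab m"] c(2)
    by (simp add: descents_def sorted_iff_list_descents_empty)
qed

text \<open>Between consecutive elements of the multichain, use the increasing chain; descents
  can then only occur at the ranks of the multichain.\<close>
lemma multichain_extends_to_max_chain:
  assumes "t \<noteq> []" "set t \<subseteq> P" "successively le t"
  shows "\<exists>m\<in>MC (hd t) (last t). set t \<subseteq> set m \<and> descents m \<subseteq> (\<lambda>x. rk x - rk (hd t)) ` set t"
  using assms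
proof (induction t rule: induct_list012)
  case (2 x)
  then show ?case
    by (intro bexI[of _ "[x]"]) (auto simp: max_chains_iff descents_def labels_singleton list_descents_def)
next
  case (3 a b t')
  obtain m' where m': "m' \<in> MC b (last (b # t'))" and sub': "set (b # t') \<subseteq> set m'"
    and desc': "descents m' \<subseteq> (\<lambda>x. rk x - rk b) ` set (b # t')"
    using 3 by auto
  obtain c where c: "c \<in> MC a b" "sorted (labels lab c)"
    using increasing_chain_unique[of a b] "3.prems" by auto
  define m where "m = c @ tl m'"
  note c_chain = max_chainsD[OF c(1)] and m'_chain = max_chainsD[OF m']
  have "m \<in> MC a (last (a # b # t'))" using max_chains_append[OF c(1) m'] by (simp add: m_def)
  moreover have "set m = set c \<union> set m'"
    using set_append_tl[OF m'_chain(1)] c_chain(1,3) m'_chain(2) last_in_set by (metis m_def)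
  then have "set (a # b # t') \<subseteq> set m" using sub' c_chain(1,2) by auto
  moreover have "descents m \<subseteq> (\<lambda>x. rk x - rk a) ` set (a # b # t')"
  proof -
    have desc_m: "descents m \<subseteq> {rk b - rk a} \<union> (+) (rk b - rk a) ` descents m'"
      using descents_append_increasing[OF c m'] by (simp add: m_def)
    have shift: "(rk b - rk a) + (rk x - rk b) = rk x - rk a" if "x \<in> set (b # t')" for x
      using max_chain_rank_ge[OF m'] sub' that max_chain_length(2)[OF c(1)] by fastforce
    show ?thesis
    proof
      fix j assume "j \<in> descents m"
      then consider "j = rk b - rk a" | x where "x \<in> set (b # t')" "j = rk b - rk a + (rk x - rk b)"
        using desc_m desc' by blast
      then show "j \<in> (\<lambda>x. rk x - rk a) ` set (a # b # t')"
        by cases (auto simp: shift)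
    qed
  qed
  ultimately show ?case by auto
qed simp

context
  fixes i0 :: "nat list"
  assumes i0: "sorted i0" "length i0 = n"
begin

text \<open>A multichain of type count (mset i0) has its v-th element at rank level_rank v,
  and its last element is the one with index top_level.\<close>
definition level_rank :: "nat \<Rightarrow> nat" where
  "level_rank v = length (filter (\<lambda>x. x < v) i0)"

definition top_level :: nat where
  "top_level = Suc (last i0)"

lemma level_rank_less_iff: "j < n \<Longrightarrow> i0 ! j < v \<longleftrightarrow> j < level_rank v"
  unfolding level_rank_def using sorted_nth_less_iff[OF i0(1)] i0(2) by simp

lemma level_rank_eq_sum: "level_rank v = (\<Sum>u<v. count (mset i0) u)"
  by (induction v) (simp_all add: level_rank_def length_filter_less_Suc)

lemma level_rank_mono: "v \<le> w \<Longrightarrow> level_rank v \<le> level_rank w"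
  by (simp add: level_rank_eq_sum sum_mono2)

lemma level_rank_le: "level_rank v \<le> n"
  unfolding level_rank_def using i0(2) length_filter_le by metis

lemma le_last_i0:
  assumes "x \<in> set i0"
  shows "x \<le> last i0"
proof -
  obtain j where "j < length i0" "x = i0 ! j" using assms by (auto simp: in_set_conv_nth)
  moreover from this have "i0 \<noteq> []" by auto
  ultimately show ?thesis
    using sorted_nth_mono[OF i0(1), of j "length i0 - 1"] by (simp add: last_conv_nth)
qed

lemma last_i0_in: "last i0 \<in> set i0"
proof -
  have "i0 \<noteq> []" using i0(2) rank_pos by auto
  then show ?thesis by simp
qed

lemma level_rank_top: "level_rank top_level = n"
  using le_last_i0 i0(2) unfolding level_rank_def top_level_def
  by (simp add: less_Suc_eq_le)

lemma level_rank_below_top: "level_rank (top_level - 1) < n"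
proof -
  have "0 < count (mset i0) (last i0)" using last_i0_in by simp
  moreover have "level_rank (top_level - 1) + count (mset i0) (last i0) = n"
    using level_rank_top by (simp add: top_level_def level_rank_eq_sum)
  ultimately show ?thesis by linarith
qed

lemma level_rank_bracket:
  assumes "r < n"
  shows "level_rank (i0 ! r) \<le> r" "r < level_rank (Suc (i0 ! r))" "i0 ! r < top_level"
  using level_rank_less_iff[OF assms, of "i0 ! r"] level_rank_less_iff[OF assms, of "Suc (i0 ! r)"]
    le_last_i0[of "i0 ! r"] assms i0(2) by (auto simp: top_level_def)

lemma list_ascents_eq_level_ranks: "list_ascents i0 = {1..<n} \<inter> range level_rank"
proof (intro set_eqI iffI)
  fix j assume "j \<in> list_ascents i0"
  then have j: "1 \<le> j" "j < n" "i0 ! (j - 1) < i0 ! j"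
    using i0(2) by (auto simp: list_ascents_def)
  then have "level_rank (i0 ! j) = j"
    using level_rank_less_iff[of j "i0 ! j"] level_rank_less_iff[of "j - 1" "i0 ! j"] by fastforce
  then show "j \<in> {1..<n} \<inter> range level_rank" using j by (metis IntI atLeastLessThan_iff rangeI)
next
  fix j assume "j \<in> {1..<n} \<inter> range level_rank"
  then obtain v where j: "1 \<le> j" "j < n" "j = level_rank v" by auto
  then have "i0 ! (j - 1) < v" "\<not> i0 ! j < v"
    using level_rank_less_iff[of "j - 1" v] level_rank_less_iff[of j v] by auto
  then show "j \<in> list_ascents i0" using j i0(2) by (auto simp: list_ascents_def)
qed

definition restrict_chain :: "'a list \<Rightarrow> 'a list" where
  "restrict_chain m = map (\<lambda>v. m ! level_rank v) [0..<Suc top_level]"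

lemma restrict_chain_nth: "v \<le> top_level \<Longrightarrow> restrict_chain m ! v = m ! level_rank v"
  unfolding restrict_chain_def by (simp del: upt_Suc)

lemma restrict_chain_in_multichains:
  assumes m: "m \<in> M"
  shows "restrict_chain m \<in> multichains (count (mset i0))"
proof -
  have len: "length m = n + 1" using M_length[OF m] .
  have in_m: "level_rank v < length m" for v using level_rank_le len by (simp add: le_imp_less_Suc)
  have rk_nth: "rk (restrict_chain m ! v) = level_rank v" if "v \<le> top_level" for v
    using M_rank[OF m in_m] restrict_chain_nth[OF that] by simp
  have "length (restrict_chain m) = Suc top_level"
    by (simp add: restrict_chain_def)
  moreover have "set (restrict_chain m) \<subseteq> P"
    using max_chain_nth_in[OF m] in_m by (auto simp: restrict_chain_def)
  moreover have "restrict_chain m ! 0 = zero" "restrict_chain m ! top_level = one"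
    using restrict_chain_nth[of 0] restrict_chain_nth[of top_level] max_chain_first_last[OF m]
      level_rank_top len by (simp_all add: level_rank_def)
  moreover have "\<forall>j<top_level. le (restrict_chain m ! j) (restrict_chain m ! Suc j)"
    using restrict_chain_nth max_chain_le[OF m] level_rank_mono in_m by simp
  moreover have "restrict_chain m ! (top_level - 1) \<noteq> one"
    using rk_nth[of "top_level - 1"] level_rank_below_top rk_one by auto
  moreover have "\<forall>v<top_level. count (mset i0) v =
      rk (restrict_chain m ! Suc v) - rk (restrict_chain m ! v)"
    using rk_nth level_rank_eq_sum by simp
  moreover have "\<forall>v\<ge>top_level. count (mset i0) v = 0"
    by (auto simp: top_level_def count_eq_zero_iff dest!: le_last_i0)
  ultimately show ?thesis unfolding multichains_def top_level_def by auto
qed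

lemma multichains_of_type_i0:
  assumes "t \<in> multichains (count (mset i0))"
  shows "length t = Suc top_level" "set t \<subseteq> P" "t ! 0 = zero" "t ! top_level = one"
    "\<forall>j<top_level. le (t ! j) (t ! Suc j)" "\<And>v. v \<le> top_level \<Longrightarrow> rk (t ! v) = level_rank v"
proof -
  obtain k where k: "k \<ge> 1" "length t = Suc k" "set t \<subseteq> P" "t ! 0 = zero" "t ! k = one"
    "\<forall>j<k. le (t ! j) (t ! Suc j)" "0 < count (mset i0) (k - 1)" "\<forall>v\<ge>k. count (mset i0) v = 0"
    "\<forall>v\<le>k. rk (t ! v) = (\<Sum>u<v. count (mset i0) u)"
    using multichain_ranks[OF assms] by blast
  have "k - 1 \<le> last i0" using k(7) le_last_i0 by simp
  moreover have "last i0 < k" using k(8) last_i0_in by (metis count_eq_zero_iff not_le set_mset_mset)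
  ultimately have "k = top_level" using k(1) by (simp add: top_level_def)
  then show "length t = Suc top_level" "set t \<subseteq> P" "t ! 0 = zero" "t ! top_level = one"
    "\<forall>j<top_level. le (t ! j) (t ! Suc j)" "\<And>v. v \<le> top_level \<Longrightarrow> rk (t ! v) = level_rank v"
    using k by (auto simp: level_rank_eq_sum)
qed

lemma segment_increasing:
  assumes m: "m \<in> M" and desc: "descents m \<subseteq> list_ascents i0" and v: "v < top_level"
  shows "sorted (labels lab (chain_segment m (level_rank v) (level_rank (Suc v))))"
proof -
  define a b where "a = level_rank v" and "b = level_rank (Suc v)"
  have ab: "a \<le> b" "b < length m"
    using level_rank_mono[of v "Suc v"] level_rank_le[of "Suc v"] M_length[OF m]
    by (auto simp: a_def b_def)
  have "list_descents (drop a (take b (labels lab m))) = {}"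
  proof (rule ccontr)
    assume "list_descents (drop a (take b (labels lab m))) \<noteq> {}"
    then obtain j where j: "j \<in> list_descents (drop a (take b (labels lab m)))" by blast
    then have "a + j \<in> list_ascents i0"
      using list_descents_drop_take[OF j] desc unfolding descents_def by blast
    then obtain u where u: "a + j = level_rank u" by (auto simp: list_ascents_eq_level_ranks)
    have "0 < j" "a + j < b" using j by (auto simp: list_descents_def)
    moreover have "\<not> u \<le> v" using u \<open>0 < j\<close> level_rank_mono[of u v] by (auto simp: a_def)
    moreover have "\<not> Suc v \<le> u" using u \<open>a + j < b\<close> level_rank_mono[of "Suc v" u] by (auto simp: b_def)
    ultimately show False by simp
  qed
  then show ?thesis
    using labels_chain_segment[OF ab] by (simp add: sorted_iff_list_descents_empty a_def b_def)
qed

text \<open>Each rank lies in a block between two consecutive levels, on which both chains are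
  the unique increasing chain.\<close>
lemma restrict_chain_inj: "inj_on restrict_chain {m\<in>M. descents m \<subseteq> list_ascents i0}"
proof (rule inj_onI)
  fix m1 m2 assume m1: "m1 \<in> {m\<in>M. descents m \<subseteq> list_ascents i0}"
    and m2: "m2 \<in> {m\<in>M. descents m \<subseteq> list_ascents i0}" and eq: "restrict_chain m1 = restrict_chain m2"
  have len: "length m1 = n + 1" "length m2 = n + 1" using M_length m1 m2 by auto
  have levels: "m1 ! level_rank v = m2 ! level_rank v" if "v \<le> top_level" for v
    using eq restrict_chain_nth[OF that] by metis
  show "m1 = m2"
  proof (rule nth_equalityI)
    fix r assume r: "r < length m1"
    show "m1 ! r = m2 ! r"
    proof (cases "r = n")
      case True
      then show ?thesis using levels[of top_level] level_rank_top by simp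
    next
      case False
      define v where "v = i0 ! r"
      then have v: "level_rank v \<le> r" "r < level_rank (Suc v)" "v < top_level"
        using level_rank_bracket[of r] r len False by auto
      define a b where "a = level_rank v" and "b = level_rank (Suc v)"
      have ab: "a \<le> b" "b < length m1" "b < length m2"
        using v level_rank_le[of "Suc v"] len by (auto simp: a_def b_def)
      have ends: "m2 ! a = m1 ! a" "m2 ! b = m1 ! b" using levels v(3) by (auto simp: a_def b_def)
      have "chain_segment m1 a b \<in> MC (m1 ! a) (m1 ! b)" "chain_segment m2 a b \<in> MC (m2 ! a) (m2 ! b)"
        using chain_segment_max_chains m1 m2 ab by blast+
      then have "chain_segment m1 a b \<in> MC (m1 ! a) (m1 ! b)" "chain_segment m2 a b \<in> MC (m1 ! a) (m1 ! b)"
        unfolding ends .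
      moreover have "sorted (labels lab (chain_segment m1 a b))" "sorted (labels lab (chain_segment m2 a b))"
        using segment_increasing m1 m2 v(3) by (simp_all add: a_def b_def)
      ultimately have "chain_segment m1 a b = chain_segment m2 a b"
        using increasing_chain_unique max_chain_ends by blast
      moreover have "chain_segment m1 a b ! (r - a) = m1 ! r" "chain_segment m2 a b ! (r - a) = m2 ! r"
        using chain_segment(2)[OF ab(1,2), of "r - a"] chain_segment(2)[OF ab(1,3), of "r - a"] v
        by (simp_all add: a_def b_def)
      ultimately show ?thesis by simp
    qed
  qed (simp add: len)
qed

lemma restrict_chain_surj:
  assumes t: "t \<in> multichains (count (mset i0))"
  shows "\<exists>m\<in>M. descents m \<subseteq> list_ascents i0 \<and> restrict_chain m = t"
proof -
  note t_props = multichains_of_type_i0[OF t]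
  have ne: "t \<noteq> []" using t_props(1) by auto
  then have ends: "t \<noteq> []" "hd t = zero" "last t = one"
    using t_props(1,3,4) by (auto simp: hd_conv_nth last_conv_nth)
  have "successively le t" using t_props(1,5) by (simp add: successively_conv_nth)
  then obtain m where m: "m \<in> M" and sub: "set t \<subseteq> set m" and desc: "descents m \<subseteq> rk ` set t"
    using multichain_extends_to_max_chain[OF ends(1) t_props(2)] ends rk_zero by auto
  have levels: "m ! level_rank v = t ! v" if "v \<le> top_level" for v
  proof -
    have "t ! v \<in> set m" using sub that t_props(1) by auto
    then obtain j where j: "j < length m" "t ! v = m ! j" by (auto simp: in_set_conv_nth)
    then have "j = level_rank v" using M_rank[OF m j(1)] t_props(6)[OF that] by simp
    then show ?thesis using j by simp
  qed
  have "restrict_chain m = t"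
    using levels t_props(1) by (intro nth_equalityI) (auto simp: restrict_chain_def simp del: upt_Suc)
  moreover have "descents m \<subseteq> list_ascents i0"
  proof
    fix j assume j: "j \<in> descents m"
    then obtain x where "x \<in> set t" "j = rk x" using desc by auto
    then obtain v where "v \<le> top_level" "j = rk (t ! v)"
      using t_props(1) by (auto simp: in_set_conv_nth less_Suc_eq_le)
    then show "j \<in> list_ascents i0"
      using j descents_subset[OF m] t_props(6) by (auto simp: list_ascents_eq_level_ranks)
  qed
  ultimately show ?thesis using m by blast
qed

lemma card_multichains_of_type_i0:
  "card (multichains (count (mset i0))) = card {m\<in>M. descents m \<subseteq> list_ascents i0}"
proof -
  have "restrict_chain ` {m\<in>M. descents m \<subseteq> list_ascents i0} = multichains (count (mset i0))"
  proof
    show "restrict_chain ` {m\<in>M. descents m \<subseteq> list_ascents i0} \<subseteq> multichains (count (mset i0))"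
      using restrict_chain_in_multichains by blast
    show "multichains (count (mset i0)) \<subseteq> restrict_chain ` {m\<in>M. descents m \<subseteq> list_ascents i0}"
      using restrict_chain_surj by fastforce
  qed
  then have "bij_betw restrict_chain {m\<in>M. descents m \<subseteq> list_ascents i0} (multichains (count (mset i0)))"
    using restrict_chain_inj by (simp add: bij_betw_def)
  then show ?thesis by (simp add: bij_betw_same_card)
qed

lemma flagF_at_type_i0:
  "flagF P le rk zero one (count (mset i0)) =
     (\<Sum>S\<in>Pow {1..<n}. int (card {m\<in>M. descents m = S}) * fundL S n (count (mset i0)))"
proof -
  have "int (card {m\<in>M. descents m \<subseteq> list_ascents i0}) =
      (\<Sum>m\<in>M. (\<lambda>S. if S \<subseteq> list_ascents i0 then 1 else 0) (descents m))"
    using M_finite by (simp add: sum.inter_filter[symmetric])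
  also have "\<dots> = (\<Sum>S\<in>Pow {1..<n}.
      of_nat (card {m\<in>M. descents m = S}) * (if S \<subseteq> list_ascents i0 then 1 else 0))"
    by (rule sum_by_fibres) (use M_finite descents_subset in auto)
  also have "\<dots> = (\<Sum>S\<in>Pow {1..<n}. int (card {m\<in>M. descents m = S}) * fundL S n (count (mset i0)))"
    by (rule sum.cong) (simp_all add: fundL_count_sorted i0)
  finally show ?thesis unfolding flagF_eq_card card_multichains_of_type_i0 .
qed

end

lemma flagF_expansion:
  "flagF P le rk zero one \<alpha> = (\<Sum>S\<in>Pow {1..<n}. int (card {m\<in>M. descents m = S}) * fundL S n \<alpha>)"
proof (cases "\<exists>xs. length xs = n \<and> sorted xs \<and> \<alpha> = count (mset xs)")
  case True
  then show ?thesis using flagF_at_type_i0 by auto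
next
  case False
  then have "multichains \<alpha> = {}" using multichains_empty_unless_sorted_type by blast
  then show ?thesis using fundL_eq_0[OF False] by (simp add: flagF_eq_card)
qed

lemma qsym_coeffs_flagF:
  "qsym_coeffs n (flagF P le rk zero one) =
     (\<lambda>S. if S \<in> Pow {1..<n} then int (card {m\<in>M. descents m = S}) else 0)"
  by (rule qsym_coeffs_eqI) (auto simp: flagF_expansion intro: sum.cong)

lemma char_coeffs_chiP:
  "char_coeffs n (chiP P le zero one lab) =
     (\<lambda>S. if S \<in> Pow {1..<n} then int (card {m\<in>M. {1..<n} - descents m = S}) else 0)"
proof (rule char_coeffs_eqI)
  fix w assume w: "set w \<subseteq> {1..<n}"
  have "chiP P le zero one lab w =
      (\<Sum>S\<in>Pow {1..<n}. of_nat (card {m\<in>M. {1..<n} - descents m = S}) * chiS S w)"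
    unfolding chiP_eq_sum_chiS[OF w] by (rule sum_by_fibres) (use M_finite in auto)
  then show "chiP P le zero one lab w = (\<Sum>S\<in>Pow {1..<n}.
      (if S \<in> Pow {1..<n} then int (card {m\<in>M. {1..<n} - descents m = S}) else 0) * chiS S w)"
    by simp
qed simp

theorem omegaQ_flagF_eq_chQ_chiP:
  "omegaQ n (flagF P le rk zero one) = chQ n (chiP P le zero one lab)"
proof
  fix \<alpha>
  have "omegaQ n (flagF P le rk zero one) \<alpha> =
      (\<Sum>S\<in>Pow {1..<n}. int (card {m\<in>M. descents m = S}) * fundL ({1..<n} - S) n \<alpha>)"
    unfolding omegaQ_def qsym_coeffs_flagF by simp
  also have "\<dots> = (\<Sum>T\<in>Pow {1..<n}. int (card {m\<in>M. {1..<n} - descents m = T}) * fundL T n \<alpha>)"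
  proof (rule sum.reindex_bij_witness[of _ "\<lambda>T. {1..<n} - T" "\<lambda>S. {1..<n} - S"])
    fix S assume S: "S \<in> Pow {1..<n}"
    have "{m\<in>M. {1..<n} - descents m = {1..<n} - S} = {m\<in>M. descents m = S}"
      using descents_subset S by blast
    then show "int (card {m\<in>M. {1..<n} - descents m = {1..<n} - S}) * fundL ({1..<n} - S) n \<alpha> =
        int (card {m\<in>M. descents m = S}) * fundL ({1..<n} - S) n \<alpha>"
      by simp
  qed auto
  also have "\<dots> = chQ n (chiP P le zero one lab) \<alpha>"
    unfolding chQ_def char_coeffs_chiP by simp
  finally show "omegaQ n (flagF P le rk zero one) \<alpha> = chQ n (chiP P le zero one lab) \<alpha>" .
qed

end

theorem mainTheorem3:
  fixes P :: "'a set" and le :: "'a \<Rightarrow> 'a \<Rightarrow> bool" and rk :: "'a \<Rightarrow> nat"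
    and zero one :: 'a and n :: nat and lab :: "'a \<Rightarrow> 'a \<Rightarrow> nat"
  assumes "bounded_graded_poset P le rk zero one n"
    and "n \<ge> 1"
    and "Sn_EL_labeling P le zero one n lab"
  shows "omegaQ n (flagF P le rk zero one) = chQ n (chiP P le zero one lab)"
proof -
  interpret EL_poset P le rk zero one n lab
    using assms by unfold_locales
  show ?thesis by (rule omegaQ_flagF_eq_chQ_chiP)
qed

end
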